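(* Let $g(z)=z^3-z^2+7z+1$, $s_1=0.275$, $s_2=2.75$, $\mathbb{C}_L=\{z:\Re z\le0\}$, $\mathbb{C}_R=\{z:\Re z>0\}$, and let $D(z_0,r)$ denote the open disc of radius $r$ centered at $z_0$. Then: (1) For all $z_0\in\mathbb{C}$ with $|z_0|=1$ and sufficiently small $\varepsilon>0$, $g(z)-z_0$ has exactly one root in $D_1=(\mathbb{C}_L\cap D(0,s_1))\cup D(0,\varepsilon)$. (2) For all $z_0\in\mathbb{C}$ with $|z_0|=1$ and sufficiently small $\varepsilon>0$, $g(z)-z_0$ has exactly two roots in $D_2=(\mathbb{C}_R\cap D(0,s_2))\setminus D(0,\varepsilon)$. (3) For all $z_0\in\mathbb{C}$ with $|z_0|=1$, $g(z)-z_0$ has no roots in $D_3=\mathbb{C}_L\setminus D(0,s_1)$. (4) For all $z_0\in\mathbb{C}$ with $|z_0|=1$, $g(z)-z_0$ has no roots in $D_4=\mathbb{C}_R\setminus D(0,s_2)$. *)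

theory Defs
  imports "HOL-Analysis.Analysis" "HOL-Computational_Algebra.Polynomial"
begin

definition gpoly :: "complex poly" where
  "gpoly = [:1, 7, -1, 1:]"

definition root_count :: "complex poly \<Rightarrow> complex set \<Rightarrow> nat" where
  "root_count p S = (\<Sum>z\<in>{z\<in>S. poly p z = 0}. order z p)"

definition CL :: "complex set" where "CL = {z. Re z \<le> 0}"
definition CR :: "complex set" where "CR = {z. Re z > 0}"

definition s1 :: real where "s1 = 0.275"
definition s2 :: real where "s2 = 2.75"

end

theory Submission
  imports Defs "HOL-Computational_Algebra.Fundamental_Theorem_Algebra"
begin

text \<open>
  A root z = x + iy of g - z0 with |z0| = 1 satisfies |g(z)|^2 - 1 = 0, and |g(z)|^2 - 1 is a
  polynomial in x and u = y^2 that is positive on the left half-plane outside D(0, s1) and on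
  the right half-plane outside D(0, s2); this gives (3) and (4).
  By Vieta the roots have elementary symmetric functions 1, 7 and z0 - 1. Two roots a, b of
  modulus below s1 are impossible, since a^2 + ab + b^2 - a - b = -7. Three roots with positive
  real part are impossible, since then Re(e2 cnj e3) > 0 while it equals 7 (Re z0 - 1) \<le> 0.
  Hence one root lies in CL \<inter> D(0, s1) and the other two in CR \<inter> D(0, s2) outside D(0, s1),
  which gives (1) and (2) for every \<epsilon> \<le> s1.
\<close>

lemma proots_monic_cubic:
  fixes a b c :: complex
  obtains r1 r2 r3 where "proots [:c, b, a, 1:] = {#r1, r2, r3#}"
    "r1 + r2 + r3 = - a" "r1*r2 + r1*r3 + r2*r3 = b" "r1*r2*r3 = - c"
proof -
  define p where "p = [:c, b, a, 1:]"
  have "size (proots p) = Suc (Suc (Suc 0))"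
    by (simp add: p_def size_proots_complex)
  then obtain r1 r2 r3 where roots: "proots p = {#r1, r2, r3#}"
    by (auto elim!: size_mset_SucE)
  have lc: "lead_coeff p = 1"
    by (simp add: p_def)
  have "p = smult (lead_coeff p) (\<Prod>x\<in>#proots p. [:-x, 1:])"
    by (rule complex_poly_decompose_multiset [symmetric])
  also have "\<dots> = [:-r1*r2*r3, r1*r2 + r1*r3 + r2*r3, -(r1 + r2 + r3), 1:]"
    by (simp add: lc roots algebra_simps)
  finally show ?thesis
    using that roots unfolding p_def by (simp add: minus_equation_iff)
qed

lemma norm_sym_quadratic_le:
  fixes a b :: complex
  assumes "cmod a \<le> r" "cmod b \<le> r"
  shows "cmod (a^2 + a*b + b^2 - a - b) \<le> 3*r^2 + 2*r"
proof -
  have r: "0 \<le> r"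
    using assms(1) norm_ge_zero[of a] by linarith
  have "cmod (a^2 + a*b + b^2 - a - b) \<le> cmod (a^2 + a*b + b^2) + cmod a + cmod b"
    using norm_triangle_ineq4[of "a^2 + a*b + b^2 - a" b] norm_triangle_ineq4[of "a^2 + a*b + b^2" a]
    by linarith
  also have "\<dots> \<le> cmod a^2 + cmod a * cmod b + cmod b^2 + cmod a + cmod b"
    using norm_triangle_ineq[of "a^2 + a*b" "b^2"] norm_triangle_ineq[of "a^2" "a*b"]
    by (simp add: norm_mult norm_power)
  also have "\<dots> \<le> r^2 + r*r + r^2 + r + r"
    using assms r by (intro add_mono mult_mono power_mono) auto
  finally show ?thesis
    by (simp add: power2_eq_square)
qed

lemma Re_sigma2_cnj_sigma3_pos:
  fixes a b c :: complex
  assumes "Re a > 0" "Re b > 0" "Re c > 0"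
  shows "Re ((a*b + a*c + b*c) * cnj (a*b*c)) > 0"
proof -
  have "Re ((a*b + a*c + b*c) * cnj (a*b*c))
          = cmod a^2 * cmod b^2 * Re c + cmod a^2 * cmod c^2 * Re b + cmod b^2 * cmod c^2 * Re a"
    unfolding cmod_power2 by (simp add: algebra_simps power2_eq_square)
  also have "\<dots> > 0"
    using assms by (intro add_pos_pos mult_pos_pos) auto
  finally show ?thesis .
qed

lemma root_count_eq_size_proots:
  assumes "p \<noteq> 0"
  shows "root_count p S = size (filter_mset (\<lambda>z. z \<in> S) (proots p))"
proof -
  let ?N = "filter_mset (\<lambda>z. z \<in> S) (proots p)"
  have "size ?N = (\<Sum>z\<in>set_mset ?N. count ?N z)"
    by (rule size_multiset_overloaded_eq)
  also have "set_mset ?N = {z\<in>S. poly p z = 0}"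
    using assms by auto
  finally show ?thesis
    unfolding root_count_def using assms by simp
qed

lemma poly_gpoly: "poly gpoly z = z^3 - z^2 + 7*z + 1"
  by (simp add: gpoly_def algebra_simps power3_eq_cube power2_eq_square)

lemma gpoly_minus_const: "gpoly - [:z0:] = [:1 - z0, 7, -1, 1:]"
  by (simp add: gpoly_def)

lemma gpoly_minus_const_nonzero: "gpoly - [:z0:] \<noteq> 0"
  by (simp add: gpoly_minus_const)

definition gnorm_excess :: "real \<Rightarrow> real \<Rightarrow> real" where
  "gnorm_excess x u = u^3 + (3*x^2 - 2*x - 13)*u^2 + (3*x^4 - 4*x^3 + 2*x^2 - 20*x + 51)*u
      + (x^6 - 2*x^5 + 15*x^4 - 12*x^3 + 47*x^2 + 14*x)"

lemma cmod_gpoly_squared: "(cmod (poly gpoly z))^2 - 1 = gnorm_excess (Re z) ((Im z)^2)"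
proof -
  obtain x y where z: "z = Complex x y"
    by (cases z)
  have re: "Re (poly gpoly z) = x^3 - 3*x*y^2 - x^2 + y^2 + 7*x + 1"
   and im: "Im (poly gpoly z) = y*(3*x^2 - y^2 - 2*x + 7)"
    by (simp_all add: poly_gpoly z power3_eq_cube power2_eq_square algebra_simps)
  have "(x^3 - 3*x*y^2 - x^2 + y^2 + 7*x + 1)^2 + (y*(3*x^2 - y^2 - 2*x + 7))^2 - 1
          = gnorm_excess x (y^2)"
    unfolding gnorm_excess_def by algebra
  then show ?thesis
    unfolding cmod_power2 re im by (simp add: z)
qed

text \<open>With \<rho> = x^2 + u the excess is 8 (x - 3/5)^2 (x + 6/5) plus a quadratic in x whose
  discriminant is negative once \<rho> \<ge> (11/4)^2.\<close>
lemma gnorm_excess_pos_right: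
  fixes x u :: real
  assumes x: "x > 0" and u: "u \<ge> 0" and \<rho>: "x^2 + u \<ge> (11/4)^2"
  shows "gnorm_excess x u > 0"
proof -
  define d where "d = x^2 + u - 121/16"
  have d: "d \<ge> 0"
    using \<rho> by (simp add: d_def power2_eq_square)
  define a where "a = 28*(121/16 + d) - 4"
  define b where "b = 2*(121/16 + d)^2 + 20*(121/16 + d) - 14 - 216/25"
  define c where "c = (121/16 + d)^3 - 13*(121/16 + d)^2 + 51*(121/16 + d) - 432/125"
  have split: "gnorm_excess x u = 8*(x - 3/5)^2*(x + 6/5) + (a*x^2 - b*x + c)"
    unfolding gnorm_excess_def a_def b_def c_def d_def by algebra
  have "4*a*c - b^2
          = 1699081931/10240000 + 163948311/32000*d + 5967673/800*d^2 + 1715*d^3 + 108*d^4"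
    unfolding a_def b_def c_def by algebra
  also have "\<dots> > 0"
    using d by (intro add_pos_nonneg) auto
  finally have disc: "4*a*c - b^2 > 0" .
  have "a*(a*x^2 - b*x + c) = (a*x - b/2)^2 + (4*a*c - b^2)/4"
    by algebra
  also have "\<dots> > 0"
    using disc by (intro add_nonneg_pos) auto
  finally have "a*x^2 - b*x + c > 0"
    using d by (simp add: a_def zero_less_mult_iff)
  moreover have "8*(x - 3/5)^2*(x + 6/5) \<ge> 0"
    using x by simp
  ultimately show ?thesis
    using split by linarith
qed

text \<open>For x = -t \<le> 0 and u \<le> 1 the excess is at least this expression; near the origin its
  only negative term -14 t is compensated by the terms linear in u.\<close>
lemma near_origin_excess_pos:
  fixes t u :: real
  assumes t: "0 \<le> t" "t < 11/40" and \<rho>: "t^2 + u \<ge> (11/40)^2"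
  shows "38*u + 20*t*u + (15*t^4 + 12*t^3 + 47*t^2 - 14*t) > 0"
proof -
  have "(38 + 20*t)*(u - ((11/40)^2 - t^2)) \<ge> 0"
    using t \<rho> by simp
  then have lin: "38*u + 20*t*u \<ge> (38 + 20*t)*((11/40)^2 - t^2)"
    by (simp add: algebra_simps)
  define e where "e = 11/40 - t"
  have e: "e > 0" "e \<le> 11/40"
    using t by (auto simp: e_def)
  have "(38 + 20*t)*((11/40)^2 - t^2) + (15*t^4 + 12*t^3 + 47*t^2 - 14*t)
          = 20339/512000 + 5187/640*e + e^2*(1473/160 - 17/2*e) + 15*e^4"
    unfolding e_def by algebra
  also have "\<dots> > 0"
    using e by (intro add_pos_nonneg mult_nonneg_nonneg) auto
  finally show ?thesis
    using lin by linarith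
qed

lemma gnorm_excess_pos_left:
  fixes x u :: real
  assumes x: "x \<le> 0" and u: "u \<ge> 0" and \<rho>: "x^2 + u \<ge> (11/40)^2"
  shows "gnorm_excess x u > 0"
proof -
  define t where "t = -x"
  have t: "t \<ge> 0"
    using x by (simp add: t_def)
  define P where "P = u*(u^2 - 13*u + 51)"
  define Q where "Q = 15*t^4 + 12*t^3 + 47*t^2 - 14*t"
  define R where "R = (3*t^2 + 2*t)*u^2 + (3*t^4 + 4*t^3 + 2*t^2)*u + t^6 + 2*t^5"
  have split: "gnorm_excess x u = P + Q + R + 20*t*u"
    unfolding gnorm_excess_def P_def Q_def R_def t_def by algebra
  have R: "R \<ge> 0"
    unfolding R_def using t u by (intro add_nonneg_nonneg) auto
  have tu: "20*t*u \<ge> 0"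
    using t u by simp
  have P_ge: "P \<ge> 35/4*u"
  proof -
    have "P = 35/4*u + u*(u - 13/2)^2"
      unfolding P_def by algebra
    moreover have "u*(u - 13/2)^2 \<ge> 0"
      using u by simp
    ultimately show ?thesis
      by linarith
  qed
  show ?thesis
  proof (cases "t \<ge> 11/40")
    case True
    have "t^2 \<ge> (11/40)^2" "t^3 \<ge> (11/40)^3"
      using True by (intro power_mono; simp)+
    then have "15*t^3 + 12*t^2 + 47*t - 14 > 0"
      using True by (simp add: power2_eq_square power3_eq_cube)
    moreover have "Q = t*(15*t^3 + 12*t^2 + 47*t - 14)"
      unfolding Q_def by algebra
    ultimately have "Q > 0"
      using True by simp
    then show ?thesis
      using split R tu P_ge u by linarith
  next
    case False
    show ?thesis
    proof (cases "u \<ge> 1")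
      case True
      have "Q \<ge> -14*t"
        unfolding Q_def using t by simp
      then show ?thesis
        using split R tu P_ge True False by linarith
    next
      case False
      have "P = 38*u + u^3 + 13*u*(1 - u)"
        unfolding P_def by algebra
      moreover have "u^3 \<ge> 0" "13*u*(1 - u) \<ge> 0"
        using u False by auto
      moreover have "38*u + 20*t*u + Q > 0"
        unfolding Q_def using t \<open>\<not> t \<ge> 11/40\<close> \<rho> by (intro near_origin_excess_pos) (auto simp: t_def)
      ultimately show ?thesis
        using split R by linarith
    qed
  qed
qed

lemma gpoly_ne_unit_left:
  assumes "cmod z0 = 1" "Re z \<le> 0" "cmod z \<ge> s1"
  shows "poly gpoly z \<noteq> z0"
proof
  assume "poly gpoly z = z0"
  then have "gnorm_excess (Re z) ((Im z)^2) = 0"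
    using cmod_gpoly_squared[of z] assms(1) by simp
  moreover have "(Re z)^2 + (Im z)^2 \<ge> (11/40)^2"
    using assms(3) unfolding s1_def cmod_power2[symmetric] by (intro power_mono) auto
  ultimately show False
    using gnorm_excess_pos_left[of "Re z" "(Im z)^2"] assms(2) by simp
qed

lemma gpoly_ne_unit_right:
  assumes "cmod z0 = 1" "Re z > 0" "cmod z \<ge> s2"
  shows "poly gpoly z \<noteq> z0"
proof
  assume "poly gpoly z = z0"
  then have "gnorm_excess (Re z) ((Im z)^2) = 0"
    using cmod_gpoly_squared[of z] assms(1) by simp
  moreover have "(Re z)^2 + (Im z)^2 \<ge> (11/4)^2"
    using assms(3) unfolding s2_def cmod_power2[symmetric] by (intro power_mono) auto
  ultimately show False
    using gnorm_excess_pos_right[of "Re z" "(Im z)^2"] assms(2) by simp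
qed

lemma not_both_below_s1:
  fixes a b c :: complex
  assumes "a + b + c = 1" "a*b + a*c + b*c = 7"
  shows "cmod a \<ge> s1 \<or> cmod b \<ge> s1"
proof (rule ccontr)
  assume "\<not> ?thesis"
  then have "cmod (a^2 + a*b + b^2 - a - b) \<le> 3 * s1^2 + 2 * s1"
    by (intro norm_sym_quadratic_le) auto
  moreover have "a^2 + a*b + b^2 - a - b = -7"
    using assms by algebra
  ultimately show False
    by (simp add: s1_def power2_eq_square)
qed

lemma gpoly_unit_root_location:
  assumes "cmod z0 = 1" "r \<in># proots (gpoly - [:z0:])"
  shows "r \<in> CL \<inter> ball 0 s1 \<union> CR \<inter> ball 0 s2"
proof -
  have "poly gpoly r = z0"
    using assms(2) unfolding set_count_proots[OF gpoly_minus_const_nonzero] by simp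
  then show ?thesis
    using gpoly_ne_unit_left[OF assms(1), of r] gpoly_ne_unit_right[OF assms(1), of r]
    by (force simp: CL_def CR_def)
qed

lemma gpoly_unit_roots_vieta:
  assumes z0: "cmod z0 = 1"
  obtains l a b where "proots (gpoly - [:z0:]) = {#l, a, b#}"
    "l + a + b = 1" "l*a + l*b + a*b = 7" "Re l \<le> 0"
proof -
  obtain r1 r2 r3 where roots: "proots (gpoly - [:z0:]) = {#r1, r2, r3#}"
    and e1: "r1 + r2 + r3 = 1" and e2: "r1*r2 + r1*r3 + r2*r3 = 7" and e3: "r1*r2*r3 = z0 - 1"
    using proots_monic_cubic[of "1 - z0" 7 "-1"] unfolding gpoly_minus_const by auto
  have "\<not> (Re r1 > 0 \<and> Re r2 > 0 \<and> Re r3 > 0)"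
  proof
    assume "Re r1 > 0 \<and> Re r2 > 0 \<and> Re r3 > 0"
    then have "Re (7 * cnj (z0 - 1)) > 0"
      using Re_sigma2_cnj_sigma3_pos[of r1 r2 r3] e2 e3 by simp
    moreover have "Re z0 \<le> 1"
      using complex_Re_le_cmod[of z0] z0 by simp
    ultimately show False
      by simp
  qed
  then consider "Re r1 \<le> 0" | "Re r2 \<le> 0" | "Re r3 \<le> 0"
    by fastforce
  then show ?thesis
  proof cases
    case 1
    then show ?thesis
      using that[of r1 r2 r3] roots e1 e2 by blast
  next
    case 2
    then show ?thesis
      using that[of r2 r1 r3] roots e1 e2 by (simp add: add_mset_commute algebra_simps)
  next
    case 3
    then show ?thesis
      using that[of r3 r1 r2] roots e1 e2 by (simp add: add_mset_commute algebra_simps)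
  qed
qed

lemma gpoly_unit_roots_split:
  assumes z0: "cmod z0 = 1"
  obtains l M where "proots (gpoly - [:z0:]) = add_mset l M" "l \<in> CL \<inter> ball 0 s1"
    "size M = 2" "set_mset M \<subseteq> CR \<inter> ball 0 s2 - ball 0 s1"
proof -
  obtain l a b where roots: "proots (gpoly - [:z0:]) = {#l, a, b#}"
    and e1: "l + a + b = 1" and e2: "l*a + l*b + a*b = 7" and "Re l \<le> 0"
    using gpoly_unit_roots_vieta[OF z0] by blast
  note located = gpoly_unit_root_location[OF z0, unfolded roots]
  have l: "l \<in> CL \<inter> ball 0 s1"
    using located[of l] \<open>Re l \<le> 0\<close> by (auto simp: CL_def CR_def)
  have "cmod a \<ge> s1" "cmod b \<ge> s1"
    using not_both_below_s1[of l a b] not_both_below_s1[of l b a] e1 e2 l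
    by (auto simp: algebra_simps)
  moreover have "a \<in> CR \<inter> ball 0 s2" "b \<in> CR \<inter> ball 0 s2"
    using located[of a] located[of b] calculation by auto
  ultimately show ?thesis
    using that[of l "{#a, b#}"] roots l by auto
qed

lemma root_count_left_region:
  assumes "cmod z0 = 1" "e \<le> s1"
  shows "root_count (gpoly - [:z0:]) ((CL \<inter> ball 0 s1) \<union> ball 0 e) = 1"
proof -
  obtain l M where roots: "proots (gpoly - [:z0:]) = add_mset l M" "l \<in> CL \<inter> ball 0 s1"
    and M: "set_mset M \<subseteq> CR \<inter> ball 0 s2 - ball 0 s1"
    using gpoly_unit_roots_split[OF assms(1)] by metis
  have "filter_mset (\<lambda>z. z \<in> (CL \<inter> ball 0 s1) \<union> ball 0 e) M = {#}"
    using M assms(2) by (force simp: CL_def CR_def)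
  then show ?thesis
    unfolding root_count_eq_size_proots[OF gpoly_minus_const_nonzero] roots(1) using roots(2) by simp
qed

lemma root_count_right_region:
  assumes "cmod z0 = 1" "e \<le> s1"
  shows "root_count (gpoly - [:z0:]) ((CR \<inter> ball 0 s2) - ball 0 e) = 2"
proof -
  obtain l M where roots: "proots (gpoly - [:z0:]) = add_mset l M" "l \<in> CL \<inter> ball 0 s1"
    and M: "size M = 2" "set_mset M \<subseteq> CR \<inter> ball 0 s2 - ball 0 s1"
    using gpoly_unit_roots_split[OF assms(1)] by metis
  have "l \<notin> CR"
    using roots(2) by (simp add: CL_def CR_def)
  moreover have "filter_mset (\<lambda>z. z \<in> (CR \<inter> ball 0 s2) - ball 0 e) M = M"
    using M assms(2) by (force simp: filter_mset_eq_conv)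
  ultimately show ?thesis
    unfolding root_count_eq_size_proots[OF gpoly_minus_const_nonzero] roots(1) using M(1) by simp
qed

theorem lemma3p5:
  shows "(\<forall>z0::complex. cmod z0 = 1 \<longrightarrow> (\<exists>e0>0. \<forall>e. 0 < e \<and> e < e0 \<longrightarrow>
            root_count (gpoly - [:z0:]) ((CL \<inter> ball 0 s1) \<union> ball 0 e) = 1))
       \<and> (\<forall>z0::complex. cmod z0 = 1 \<longrightarrow> (\<exists>e0>0. \<forall>e. 0 < e \<and> e < e0 \<longrightarrow>
            root_count (gpoly - [:z0:]) ((CR \<inter> ball 0 s2) - ball 0 e) = 2))
       \<and> (\<forall>z0::complex. cmod z0 = 1 \<longrightarrow> (\<forall>z\<in>CL - ball 0 s1. poly (gpoly - [:z0:]) z \<noteq> 0))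
       \<and> (\<forall>z0::complex. cmod z0 = 1 \<longrightarrow> (\<forall>z\<in>CR - ball 0 s2. poly (gpoly - [:z0:]) z \<noteq> 0))"
proof (intro conjI allI impI ballI)
  have "s1 > 0"
    by (simp add: s1_def)
  fix z0 :: complex
  assume "cmod z0 = 1"
  then show "\<exists>e0>0. \<forall>e. 0 < e \<and> e < e0 \<longrightarrow>
               root_count (gpoly - [:z0:]) ((CL \<inter> ball 0 s1) \<union> ball 0 e) = 1"
        and "\<exists>e0>0. \<forall>e. 0 < e \<and> e < e0 \<longrightarrow>
               root_count (gpoly - [:z0:]) ((CR \<inter> ball 0 s2) - ball 0 e) = 2"
    using root_count_left_region root_count_right_region \<open>s1 > 0\<close> by (meson less_imp_le)+
next
  fix z0 z :: complex
  assume "cmod z0 = 1"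
  then show "z \<in> CL - ball 0 s1 \<Longrightarrow> poly (gpoly - [:z0:]) z \<noteq> 0"
        and "z \<in> CR - ball 0 s2 \<Longrightarrow> poly (gpoly - [:z0:]) z \<noteq> 0"
    using gpoly_ne_unit_left gpoly_ne_unit_right by (auto simp: CL_def CR_def)
qed

end
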